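(* Let $\sigma$ be a convex polytope in a Euclidean vector space $\mathbb{E}$ and $D\subseteq\mathbb{E}$ a finite set that is sufficiently rich for $\sigma$. Then among the points of $\sigma$ that minimize the Euclidean distance to $Z(D)$ there is a vertex of $\sigma$. Moreover, the set of points of $\sigma$ maximizing the distance to $Z(D)$ is a face of $\sigma$.
   Context: $Z(D)=\sum_{z\in D}[0,z]$ (Minkowski sum). $D$ is sufficiently rich for $\sigma$ if $w-v\in D$ for any two distinct vertices $v,w$ of $\sigma$. *)

theory Defs
  imports "HOL-Analysis.Analysis" "HOL-Library.Set_Algebras"
begin

definition zonotope :: "'a::euclidean_space set \<Rightarrow> 'a set" where
  "zonotope D = (\<Sum>z\<in>D. closed_segment 0 z)"

definition sufficiently_rich :: "'a::euclidean_space set \<Rightarrow> 'a set \<Rightarrow> bool" where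
  "sufficiently_rich D \<sigma> \<longleftrightarrow>
     (\<forall>v w. v extreme_point_of \<sigma> \<longrightarrow> w extreme_point_of \<sigma> \<longrightarrow> v \<noteq> w \<longrightarrow> w - v \<in> D)"

end

theory Submission
  imports Defs
begin

(* Let f x = infdist x (Z(D)).  The heart of the proof is a translation property of
   zonotopes: if every difference of two distinct points of a finite set W lies in D,
   then for x in conv W and z in Z(D) there is a w in W with z + (w - x) in Z(D).
   It is proved by induction on W: writing x as a convex combination with weights c,
   sliding z along one generator u - w of D moves the weight of w onto u (or vice
   versa) while keeping z - x fixed.  Translating a nearest point of Z(D) this way shows
   that f is "hull-dominated" on the vertex set V of sigma: every point of the convex
   hull of W <= V is at least as far from Z(D) as some point of W.

   The theorem then follows from general facts about a hull-dominated f on conv V: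
   its minimum is attained at a point of V, and, f being convex (a distance to a convex
   set), its maximizers are exactly conv {v in V. f v = max}, hence convex; and a convex
   set of maximizers of a convex function is a face. *)


section \<open>Zonotopes and their translation property\<close>

lemma zonotope_remove:
  assumes "finite D" "d \<in> D"
  shows "zonotope D = closed_segment 0 d + zonotope (D - {d})"
  unfolding zonotope_def using sum.remove[OF assms] by simp

lemma zonotope_compact_convex:
  assumes "finite D"
  shows "compact (zonotope D) \<and> convex (zonotope D) \<and> 0 \<in> zonotope D"
  using assms
proof (induction D rule: finite_induct)
  case empty
  then show ?case by (simp add: zonotope_def)
next
  case (insert d F)
  have eq: "zonotope (insert d F) = closed_segment 0 d + zonotope F"
    unfolding zonotope_def using insert by simp
  have "closed_segment 0 d + zonotope F = {x + y |x y. x \<in> closed_segment 0 d \<and> y \<in> zonotope F}"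
    by (auto simp: set_plus_def)
  then have "compact (closed_segment 0 d + zonotope F)"
    using compact_sums[of "closed_segment 0 d" "zonotope F"] insert by simp
  moreover have "convex (closed_segment 0 d + zonotope F)"
    by (rule convex_set_plus) (use insert in auto)
  moreover have "0 \<in> closed_segment 0 d + zonotope F"
    using insert set_plus_intro[of 0 "closed_segment 0 d" 0 "zonotope F"] by auto
  ultimately show ?case using eq by simp
qed

text \<open>A point of Z(D) can be slid along a generator d: either forward by a d or backward
  by b d stays inside, provided a + b \<le> 1 (the segment coordinate t has room on one side).\<close>

lemma zonotope_slide:
  assumes "finite D" "d \<in> D" "z \<in> zonotope D" "0 \<le> a" "0 \<le> b" "a + b \<le> 1"
  shows "z + a *\<^sub>R d \<in> zonotope D \<or> z - b *\<^sub>R d \<in> zonotope D"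
proof -
  obtain t q where t: "0 \<le> t" "t \<le> 1" and q: "q \<in> zonotope (D - {d})"
    and z: "z = t *\<^sub>R d + q"
    using assms(3) zonotope_remove[OF assms(1,2)] by (auto elim!: set_plus_elim simp: in_segment)
  have in_Z: "s *\<^sub>R d + q \<in> zonotope D" if "0 \<le> s" "s \<le> 1" for s
  proof -
    have "s *\<^sub>R d \<in> closed_segment 0 d" using that by (auto simp: in_segment)
    from set_plus_intro[OF this q] show ?thesis using zonotope_remove[OF assms(1,2)] by simp
  qed
  show ?thesis
  proof (cases "t + a \<le> 1")
    case True
    then have "(t + a) *\<^sub>R d + q \<in> zonotope D" using t assms(4) by (intro in_Z) auto
    then show ?thesis using z by (simp add: algebra_simps)
  next
    case False
    then have "(t - b) *\<^sub>R d + q \<in> zonotope D" using t assms(5,6) by (intro in_Z) auto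
    then show ?thesis using z by (simp add: algebra_simps)
  qed
qed

text \<open>Moving the whole weight of w onto another point u of W turns a convex combination
  over W into one over W - {w}.\<close>

lemma convex_hull_shift_weight:
  fixes W :: "'a::real_vector set"
  assumes "finite W" "w \<in> W" "u \<in> W" "w \<noteq> u" "\<forall>v\<in>W. 0 \<le> c v" "sum c W = 1"
  shows "(\<Sum>v\<in>W. c v *\<^sub>R v) + c w *\<^sub>R (u - w) \<in> convex hull (W - {w})"
proof -
  define c' where "c' = (\<lambda>v. c v + (if v = u then c w else 0))"
  have fin: "finite (W - {w})" and uin: "u \<in> W - {w}" using assms by auto
  have "sum c' (W - {w}) = sum c (W - {w}) + c w"
    unfolding c'_def using fin uin by (simp add: sum.distrib)
  also have "\<dots> = 1" using sum.remove[OF assms(1,2), of c] assms(6) by simp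
  finally have weights: "sum c' (W - {w}) = 1" .
  have "(\<Sum>v\<in>W - {w}. c' v *\<^sub>R v)
      = (\<Sum>v\<in>W - {w}. c v *\<^sub>R v + (if v = u then c w *\<^sub>R u else 0))"
    unfolding c'_def by (intro sum.cong) (auto simp: scaleR_add_left)
  also have "\<dots> = (\<Sum>v\<in>W - {w}. c v *\<^sub>R v) + c w *\<^sub>R u"
    using fin uin by (simp add: sum.distrib)
  also have "\<dots> = (\<Sum>v\<in>W. c v *\<^sub>R v) + c w *\<^sub>R (u - w)"
    using sum.remove[OF assms(1,2), of "\<lambda>v. c v *\<^sub>R v"] by (simp add: algebra_simps)
  finally have point: "(\<Sum>v\<in>W - {w}. c' v *\<^sub>R v) = (\<Sum>v\<in>W. c v *\<^sub>R v) + c w *\<^sub>R (u - w)" .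
  have "\<forall>v\<in>W - {w}. 0 \<le> c' v" using assms(2,5) unfolding c'_def by auto
  then show ?thesis unfolding convex_hull_finite[OF fin] using weights point by blast
qed

lemma zonotope_reduce_step:
  fixes W D :: "'a::euclidean_space set"
  assumes "finite D" "finite W" "w \<in> W" "u \<in> W" "w \<noteq> u" "u - w \<in> D"
    and "x \<in> convex hull W" "z \<in> zonotope D"
  shows "\<exists>W' x' z'. W' \<subset> W \<and> x' \<in> convex hull W' \<and> z' \<in> zonotope D \<and> z' - x' = z - x"
proof -
  obtain c where c: "\<forall>v\<in>W. 0 \<le> c v" "sum c W = 1" "x = (\<Sum>v\<in>W. c v *\<^sub>R v)"
    using assms(7) unfolding convex_hull_finite[OF assms(2)] by auto
  have "sum c {w, u} \<le> sum c W"
    by (rule sum_mono2) (use assms(2-4) c in auto)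
  then have "c w + c u \<le> 1" using assms(5) c by simp
  then consider "z + c w *\<^sub>R (u - w) \<in> zonotope D" | "z - c u *\<^sub>R (u - w) \<in> zonotope D"
    using zonotope_slide[OF assms(1,6,8), of "c w" "c u"] assms(3,4) c(1) by blast
  then show ?thesis
  proof cases
    case 1
    have "x + c w *\<^sub>R (u - w) \<in> convex hull (W - {w})"
      using convex_hull_shift_weight[of W w u c] assms(2-5) c by simp
    moreover have "W - {w} \<subset> W" using assms(3) by auto
    moreover have "(z + c w *\<^sub>R (u - w)) - (x + c w *\<^sub>R (u - w)) = z - x" by simp
    ultimately show ?thesis using 1 by blast
  next
    case 2
    have "x + c u *\<^sub>R (w - u) \<in> convex hull (W - {u})"
      using convex_hull_shift_weight[of W u w c] assms(2-5) c by simp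
    moreover have "z + c u *\<^sub>R (w - u) \<in> zonotope D"
      using 2 by (simp add: algebra_simps)
    moreover have "W - {u} \<subset> W" using assms(4) by auto
    moreover have "(z + c u *\<^sub>R (w - u)) - (x + c u *\<^sub>R (w - u)) = z - x" by simp
    ultimately show ?thesis by blast
  qed
qed

lemma zonotope_translate_to_vertex:
  fixes W D :: "'a::euclidean_space set"
  assumes "finite D" "finite W" "\<forall>a\<in>W. \<forall>b\<in>W. a \<noteq> b \<longrightarrow> b - a \<in> D"
    and "x \<in> convex hull W" "z \<in> zonotope D"
  shows "\<exists>w\<in>W. z + (w - x) \<in> zonotope D"
  using assms(2-5)
proof (induction W arbitrary: x z rule: finite_psubset_induct)
  case (psubset W)
  show ?case
  proof (cases "\<exists>w\<in>W. \<exists>u\<in>W. w \<noteq> u")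
    case True
    then obtain w u where wu: "w \<in> W" "u \<in> W" "w \<noteq> u" by blast
    have "u - w \<in> D" using psubset.prems(1) wu by blast
    then obtain W' x' z' where W': "W' \<subset> W" "x' \<in> convex hull W'" "z' \<in> zonotope D" "z' - x' = z - x"
      using zonotope_reduce_step[OF assms(1) psubset.hyps wu _ psubset.prems(2,3)] by blast
    moreover have "\<forall>a\<in>W'. \<forall>b\<in>W'. a \<noteq> b \<longrightarrow> b - a \<in> D" using psubset.prems(1) W'(1) by blast
    ultimately obtain w' where "w' \<in> W'" "z' + (w' - x') \<in> zonotope D"
      using psubset.IH[of W' x' z'] by blast
    moreover have "z' + (w' - x') = z + (w' - x)" using W'(4) by (simp add: algebra_simps)
    ultimately show ?thesis using W'(1) by auto
  next
    case False
    obtain w where "w \<in> W" using psubset.prems(2) by fastforce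
    with False have "W = {w}" by blast
    then show ?thesis using psubset.prems by simp
  qed
qed

definition hull_dominated :: "('a::real_vector \<Rightarrow> real) \<Rightarrow> 'a set \<Rightarrow> bool" where
  "hull_dominated f V \<longleftrightarrow> (\<forall>W\<subseteq>V. \<forall>x\<in>convex hull W. \<exists>w\<in>W. f w \<le> f x)"

lemma hull_dominatedD:
  assumes "hull_dominated f V" "W \<subseteq> V" "x \<in> convex hull W"
  obtains w where "w \<in> W" "f w \<le> f x"
  using assms unfolding hull_dominated_def by blast

text \<open>Main consequence of the translation property: if all differences of points of V lie in D,
  the distance to Z(D) is hull-dominated on V (translate a nearest point of Z(D) by w - x).\<close>

lemma infdist_zonotope_hull_dominated:
  fixes V D :: "'a::euclidean_space set"
  assumes "finite D" "finite V" "\<forall>a\<in>V. \<forall>b\<in>V. a \<noteq> b \<longrightarrow> b - a \<in> D"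
  shows "hull_dominated (\<lambda>x. infdist x (zonotope D)) V"
  unfolding hull_dominated_def
proof (intro allI impI ballI)
  fix W x assume W: "W \<subseteq> V" and x: "x \<in> convex hull W"
  have "closed (zonotope D)" "0 \<in> zonotope D"
    using zonotope_compact_convex[OF assms(1)] compact_imp_closed by auto
  then obtain z where z: "z \<in> zonotope D" "infdist x (zonotope D) = dist x z"
    using infdist_attains_inf by blast
  have "finite W" "\<forall>a\<in>W. \<forall>b\<in>W. a \<noteq> b \<longrightarrow> b - a \<in> D"
    using W assms(2,3) finite_subset by blast+
  then obtain w where w: "w \<in> W" "z + (w - x) \<in> zonotope D"
    using zonotope_translate_to_vertex[OF assms(1) _ _ x z(1)] by blast
  have "infdist w (zonotope D) \<le> dist w (z + (w - x))" by (rule infdist_le[OF w(2)])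
  also have "\<dots> = dist x z" by (simp add: dist_norm algebra_simps)
  finally show "\<exists>w\<in>W. infdist w (zonotope D) \<le> infdist x (zonotope D)" using w z by auto
qed

section \<open>Convex functions on polytopes\<close>

lemma convex_on_infdist:
  fixes Z :: "'a::euclidean_space set"
  assumes "convex Z" "closed Z" "Z \<noteq> {}"
  shows "convex_on UNIV (\<lambda>x. infdist x Z)"
proof (rule convex_onI)
  fix t :: real and a b :: 'a
  assume t: "0 < t" "t < 1"
  obtain za where za: "za \<in> Z" "infdist a Z = dist a za"
    using infdist_attains_inf[OF assms(2,3)] by blast
  obtain zb where zb: "zb \<in> Z" "infdist b Z = dist b zb"
    using infdist_attains_inf[OF assms(2,3)] by blast
  have "(1 - t) *\<^sub>R za + t *\<^sub>R zb \<in> Z"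
    using assms(1) za zb t unfolding convex_def by auto
  then have "infdist ((1 - t) *\<^sub>R a + t *\<^sub>R b) Z \<le> dist ((1 - t) *\<^sub>R a + t *\<^sub>R b) ((1 - t) *\<^sub>R za + t *\<^sub>R zb)"
    by (rule infdist_le)
  also have "\<dots> = norm ((1 - t) *\<^sub>R (a - za) + t *\<^sub>R (b - zb))"
    by (simp add: dist_norm algebra_simps)
  also have "\<dots> \<le> (1 - t) * dist a za + t * dist b zb"
    using norm_triangle_ineq[of "(1 - t) *\<^sub>R (a - za)" "t *\<^sub>R (b - zb)"] t by (simp add: dist_norm)
  finally show "infdist ((1 - t) *\<^sub>R a + t *\<^sub>R b) Z \<le> (1 - t) * infdist a Z + t * infdist b Z"
    using za zb by simp
qed simp

lemma polytope_vertices: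
  fixes \<sigma> :: "'a::euclidean_space set"
  assumes "polytope \<sigma>"
  shows "finite {v. v extreme_point_of \<sigma>} \<and> \<sigma> = convex hull {v. v extreme_point_of \<sigma>}"
proof -
  obtain P where P: "finite P" "\<sigma> = convex hull P" using assms unfolding polytope_def by blast
  show ?thesis
    unfolding P(2) using Krein_Milman_polytope[OF P(1)]
      finite_subset[OF extreme_points_of_convex_hull P(1)] by simp
qed

lemma convex_hull_finite_support:
  fixes V :: "'a::real_vector set"
  assumes "finite V" "W \<subseteq> V" "\<forall>v\<in>V. 0 \<le> c v" "sum c V = 1" "\<forall>v\<in>V - W. c v = 0"
  shows "(\<Sum>v\<in>V. c v *\<^sub>R v) \<in> convex hull W"
proof -
  have "sum c W = sum c V" "(\<Sum>v\<in>W. c v *\<^sub>R v) = (\<Sum>v\<in>V. c v *\<^sub>R v)"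
    using assms(5) by (auto intro: sum.mono_neutral_left[OF assms(1,2)])
  moreover have "\<forall>v\<in>W. 0 \<le> c v" using assms(2,3) by blast
  ultimately have "\<exists>u. (\<forall>v\<in>W. 0 \<le> u v) \<and> sum u W = 1 \<and> (\<Sum>v\<in>W. u v *\<^sub>R v) = (\<Sum>v\<in>V. c v *\<^sub>R v)"
    using assms(4) by (intro exI[of _ c]) simp
  then show ?thesis
    unfolding convex_hull_finite[OF finite_subset[OF assms(2,1)]] by simp
qed

text \<open>If a convex function at x \<in> conv V dominates its values on V, then x is a convex combination
  of those points of V where the value f x is attained: weights on strictly smaller values
  would make Jensen's inequality strict.\<close>

lemma convex_on_hull_of_maximal_points:
  fixes f :: "'a::real_vector \<Rightarrow> real"
  assumes "convex_on UNIV f" "finite V" "x \<in> convex hull V" "\<forall>v\<in>V. f v \<le> f x"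
  shows "x \<in> convex hull {v\<in>V. f v = f x}"
proof -
  obtain c where c: "\<forall>v\<in>V. 0 \<le> c v" "sum c V = 1" "x = (\<Sum>v\<in>V. c v *\<^sub>R v)"
    using assms(3) unfolding convex_hull_finite[OF assms(2)] by auto
  have "V \<noteq> {}" using c(2) by auto
  then have "f x \<le> (\<Sum>v\<in>V. c v * f v)"
    using convex_on_sum[OF assms(2) _ assms(1), of c "\<lambda>v. v"] c by simp
  then have "(\<Sum>v\<in>V. c v * (f x - f v)) \<le> 0"
    using c(2) by (simp add: right_diff_distrib sum_subtractf sum_distrib_right[symmetric])
  moreover have nonneg: "\<And>v. v \<in> V \<Longrightarrow> 0 \<le> c v * (f x - f v)" using c(1) assms(4) by simp
  then have "0 \<le> (\<Sum>v\<in>V. c v * (f x - f v))" by (rule sum_nonneg)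
  ultimately have "(\<Sum>v\<in>V. c v * (f x - f v)) = 0" by linarith
  then have "\<forall>v\<in>V. c v * (f x - f v) = 0"
    using sum_nonneg_eq_0_iff[OF assms(2), of "\<lambda>v. c v * (f x - f v)"] nonneg by simp
  then have "\<forall>v\<in>V - {v\<in>V. f v = f x}. c v = 0" by auto
  with convex_hull_finite_support[OF assms(2) _ c(1,2)] show ?thesis
    unfolding c(3) by (metis (no_types, lifting) mem_Collect_eq subsetI)
qed

text \<open>The maximizers of a convex function on S satisfy the extremality condition of a face;
  hence they form a face of S as soon as they form a convex set.\<close>

lemma convex_on_maximizers_face:
  fixes f :: "'a::real_vector \<Rightarrow> real"
  assumes "convex_on UNIV f" and "convex {x\<in>S. \<forall>y\<in>S. f y \<le> f x}"
  shows "{x\<in>S. \<forall>y\<in>S. f y \<le> f x} face_of S"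
  unfolding face_of_def
proof (intro conjI ballI impI)
  fix a b x
  assume ab: "a \<in> S" "b \<in> S" and x: "x \<in> {x\<in>S. \<forall>y\<in>S. f y \<le> f x}" and "x \<in> open_segment a b"
  then obtain t where t: "0 < t" "t < 1" "x = (1 - t) *\<^sub>R a + t *\<^sub>R b"
    unfolding in_segment by blast
  have jensen: "f x \<le> (1 - t) * f a + t * f b"
    using convex_onD[OF assms(1), of t a b] t by simp
  have le: "f a \<le> f x" "f b \<le> f x" using x ab by auto
  have "t * f b \<le> t * f x" "(1 - t) * f a \<le> (1 - t) * f x"
    using le t by (simp_all add: mult_left_mono)
  then have "(1 - t) * f x \<le> (1 - t) * f a" "t * f x \<le> t * f b"
    using jensen by (simp_all add: algebra_simps)
  then have "f x \<le> f a" "f x \<le> f b" using t by simp_all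
  then show "a \<in> {x\<in>S. \<forall>y\<in>S. f y \<le> f x}" "b \<in> {x\<in>S. \<forall>y\<in>S. f y \<le> f x}"
    using x ab le by auto
qed (use assms(2) in auto)

lemma hull_dominated_min_at_vertex:
  fixes f :: "'a::real_vector \<Rightarrow> real"
  assumes "hull_dominated f V" "finite V" "V \<noteq> {}"
  shows "\<exists>v\<in>V. \<forall>y\<in>convex hull V. f v \<le> f y"
proof -
  have "Min (f ` V) \<in> f ` V" using assms(2,3) by simp
  then obtain v where v: "Min (f ` V) = f v" "v \<in> V" by (rule imageE)
  have "f v \<le> f y" if y: "y \<in> convex hull V" for y
  proof -
    obtain w where "w \<in> V" "f w \<le> f y" using hull_dominatedD[OF assms(1) order_refl y] .
    moreover have "Min (f ` V) \<le> f w" using assms(2) \<open>w \<in> V\<close> by simp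
    ultimately show ?thesis using v(1) by simp
  qed
  then show ?thesis using v(2) by blast
qed

text \<open>For a convex, hull-dominated f, the maximizers over conv V are exactly the convex hull of
  the points of V where f takes its largest value m: convexity puts every maximizer into this
  hull, and domination shows that no point of the hull falls below m.\<close>

lemma hull_dominated_maximizers:
  fixes f :: "'a::real_vector \<Rightarrow> real"
  assumes "convex_on UNIV f" "hull_dominated f V" "finite V" "V \<noteq> {}"
  defines "m \<equiv> Max (f ` V)"
  shows "{x\<in>convex hull V. \<forall>y\<in>convex hull V. f y \<le> f x} = convex hull {v\<in>V. f v = m}"
proof (intro equalityI subsetI)
  have "m \<in> f ` V" unfolding m_def using assms(3,4) by simp
  then have m: "\<forall>w\<in>V. f w \<le> m" "\<exists>w\<in>V. f w = m" unfolding m_def using assms(3) by auto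
  have below_m: "\<forall>y\<in>convex hull V. f y \<le> m"
    using convex_on_convex_hull_bound[OF convex_on_subset[OF assms(1)] m(1)] by simp
  {
    fix x assume "x \<in> {x\<in>convex hull V. \<forall>y\<in>convex hull V. f y \<le> f x}"
    then have x: "x \<in> convex hull V" "\<forall>y\<in>convex hull V. f y \<le> f x" by auto
    obtain w where "w \<in> V" "f w = m" using m(2) by blast
    then have "m \<le> f x" using x(2) hull_subset[of V convex] by blast
    then have "f x = m" using below_m x(1) by (simp add: antisym)
    then show "x \<in> convex hull {v\<in>V. f v = m}"
      using convex_on_hull_of_maximal_points[OF assms(1,3) x(1)] x(2) hull_subset[of V convex] by auto
  next
    fix y assume y: "y \<in> convex hull {v\<in>V. f v = m}"
    have "y \<in> convex hull V" using hull_mono[of "{v\<in>V. f v = m}" V] y by blast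
    moreover obtain w where "w \<in> {v\<in>V. f v = m}" "f w \<le> f y"
      using hull_dominatedD[OF assms(2) _ y] by blast
    ultimately show "y \<in> {x\<in>convex hull V. \<forall>y\<in>convex hull V. f y \<le> f x}" using below_m by auto
  }
qed

theorem mainTheorem16:
  fixes \<sigma> D :: "'a::euclidean_space set"
  assumes "polytope \<sigma>" and "\<sigma> \<noteq> {}"
    and "finite D" and "sufficiently_rich D \<sigma>"
  shows "(\<exists>v. v extreme_point_of \<sigma> \<and>
            v \<in> {x \<in> \<sigma>. \<forall>y\<in>\<sigma>. infdist x (zonotope D) \<le> infdist y (zonotope D)}) \<and>
         {x \<in> \<sigma>. \<forall>y\<in>\<sigma>. infdist y (zonotope D) \<le> infdist x (zonotope D)} face_of \<sigma>"
proof -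
  define f where "f = (\<lambda>x. infdist x (zonotope D))"
  define V where "V = {v. v extreme_point_of \<sigma>}"
  have V: "finite V" "\<sigma> = convex hull V" using polytope_vertices[OF assms(1)] unfolding V_def by auto
  then have "V \<noteq> {}" using assms(2) by auto
  have dominated: "hull_dominated f V"
    unfolding f_def using assms(3,4) V(1)
    by (intro infdist_zonotope_hull_dominated) (auto simp: sufficiently_rich_def V_def)
  have f_convex: "convex_on UNIV f"
    unfolding f_def using zonotope_compact_convex[OF assms(3)]
    by (intro convex_on_infdist) (auto simp: compact_imp_closed)
  obtain v where "v \<in> V" "\<forall>y\<in>\<sigma>. f v \<le> f y"
    using hull_dominated_min_at_vertex[OF dominated V(1) \<open>V \<noteq> {}\<close>] V(2) by blast
  moreover have "convex {x\<in>\<sigma>. \<forall>y\<in>\<sigma>. f y \<le> f x}"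
    using hull_dominated_maximizers[OF f_convex dominated V(1) \<open>V \<noteq> {}\<close>] V(2) by simp
  then have "{x\<in>\<sigma>. \<forall>y\<in>\<sigma>. f y \<le> f x} face_of \<sigma>"
    by (rule convex_on_maximizers_face[OF f_convex])
  ultimately show ?thesis unfolding f_def V_def by (auto simp: extreme_point_of_def)
qed

end
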